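(* For every $K>0$ there exist $\varepsilon>0$ and $C>0$ such that for all $\theta\in(0,\varepsilon)$ and all real $\delta$ with $|\delta|\le K\theta$, \[\big|f_0(\theta+\delta)-f_0(\theta)-f_0'(0)\,\delta\big|\le C\,\theta|\delta|,\qquad \big|j_0(\theta+\delta)-j_0(\theta)\big|\le C|\delta|.\] Moreover $f_0(0)=\ln 4$, $\exp(f_0'(0))=e/3$ and $j_0(0)=0$.
   Context: Define $\lambda:[0,\infty)\to(0,1/4]$ by $\lambda(0)=1/4$ and, for $\theta>0$, $\lambda(\theta)$ is the unique $\lambda\in(0,1/4)$ with $-1+\frac{\operatorname{artanh}(\sqrt{1-4\lambda})}{\sqrt{1-4\lambda}}=\theta$. For $\theta>0$ set $f(\theta)=-\ln\lambda(\theta)-2\theta-\theta\ln(1-4\lambda(\theta))$ and $j(\theta)=-\tfrac12\ln(1-4(\theta+1)\lambda(\theta))+\tfrac12\ln 2$, and $f_0(\theta)=f(\theta)+\theta\ln\theta$, $j_0(\theta)=j(\theta)+\tfrac12\ln\theta$. The functions $f_0,j_0$ are real-analytic on $(0,\infty)$ and extend to real-analytic functions on an open neighbourhood of $0$; $f_0,j_0$ denote these extensions. *)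

theory Defs
  imports "HOL-Analysis.Analysis"
begin

definition lam :: "real \<Rightarrow> real" where
  "lam \<theta> = (if \<theta> = 0 then 1/4 else
     (THE l. 0 < l \<and> l < 1/4 \<and>
        -1 + artanh (sqrt (1 - 4*l)) / sqrt (1 - 4*l) = \<theta>))"

definition f :: "real \<Rightarrow> real" where
  "f \<theta> = - ln (lam \<theta>) - 2*\<theta> - \<theta> * ln (1 - 4 * lam \<theta>)"

definition j :: "real \<Rightarrow> real" where
  "j \<theta> = - (1/2) * ln (1 - 4 * (\<theta> + 1) * lam \<theta>) + (1/2) * ln 2"

text \<open>f0 and j0 on (0,inf), before extension\<close>
definition f0 :: "real \<Rightarrow> real" where
  "f0 \<theta> = f \<theta> + \<theta> * ln \<theta>"

definition j0 :: "real \<Rightarrow> real" where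
  "j0 \<theta> = j \<theta> + (1/2) * ln \<theta>"

definition real_analytic_on :: "(real \<Rightarrow> real) \<Rightarrow> real set \<Rightarrow> bool" where
  "real_analytic_on g S \<longleftrightarrow> open S \<and> (\<forall>x\<in>S. \<exists>r>0. \<exists>a::nat \<Rightarrow> real.
      \<forall>y. \<bar>y - x\<bar> < r \<longrightarrow> (\<lambda>n. a n * (y - x)^n) sums g y)"

end

theory Submission
  imports Defs "HOL-Real_Asymp.Real_Asymp"
begin

(* A real-analytic function is C^2 near 0, so on the ball of radius (1 + K) theta, which contains
   theta and theta + delta, the linearization error of F at 0 is O(theta |delta|) and J is
   Lipschitz; only analyticity at 0 is used, not the hypotheses {0<..} \<subseteq> U, V.
   The values at 0 are limits as theta -> 0+, computed through the substitution
   s = sqrt (1 - 4 lam theta): then lam theta = (1 - s^2)/4, theta = artanh s / s - 1 ~ s^2/3,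
   and f0, j0 become explicit functions of s with f0 = ln 4 + (1 - ln 3) theta + o(theta)
   and j0 -> (ln 2 + ln (1/3) - ln (2/3))/2 = 0. *)

lemma power_series_has_real_derivative:
  fixes a :: "nat \<Rightarrow> real"
  assumes sums: "\<And>y. \<bar>y - x\<bar> < r \<Longrightarrow> (\<lambda>n. a n * (y - x)^n) sums G y"
    and y: "\<bar>y - x\<bar> < r"
  shows "(G has_real_derivative deriv G y) (at y)"
    and "(\<lambda>n. diffs a n * (y - x)^n) sums deriv G y"
proof -
  define g where "g z = (\<Sum>n. a n * z^n)" for z :: real
  have summable: "summable (\<lambda>n. a n * z^n)" if "norm z < r" for z
    using sums[of "z + x"] that by (simp add: sums_iff)
  have "(g has_real_derivative (\<Sum>n. diffs a n * (y - x)^n)) (at (y - x))"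
    unfolding g_def using y by (intro termdiffs_strong'[OF summable]) auto
  hence "((\<lambda>t. g (t - x)) has_real_derivative (\<Sum>n. diffs a n * (y - x)^n)) (at y)"
    using DERIV_shift[of g _ y "- x"] by simp
  hence G': "(G has_real_derivative (\<Sum>n. diffs a n * (y - x)^n)) (at y)"
    by (rule has_field_derivative_transform_within_open[where S = "ball x r"])
       (use y sums in \<open>auto simp: g_def sums_iff dist_real_def\<close>)
  thus "(G has_real_derivative deriv G y) (at y)"
    by (simp add: DERIV_imp_deriv)
  have "summable (\<lambda>n. diffs a n * (y - x)^n)"
    using y by (intro termdiff_converges[OF _ summable]) auto
  thus "(\<lambda>n. diffs a n * (y - x)^n) sums deriv G y"
    using DERIV_imp_deriv[OF G'] by (simp add: sums_iff)
qed

lemma real_analytic_on_imp_DERIV: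
  assumes "real_analytic_on G S" "x \<in> S"
  shows "(G has_real_derivative deriv G x) (at x)"
proof -
  obtain r a where "r > 0" "\<And>y. \<bar>y - x\<bar> < r \<Longrightarrow> (\<lambda>n. a n * (y - x)^n) sums G y"
    using assms unfolding real_analytic_on_def by blast
  thus ?thesis using power_series_has_real_derivative(1)[of x r a G x] by simp
qed

lemma real_analytic_on_deriv:
  assumes "real_analytic_on G S"
  shows "real_analytic_on (deriv G) S"
  unfolding real_analytic_on_def
proof (intro conjI ballI)
  show "open S" using assms by (simp add: real_analytic_on_def)
  fix x assume "x \<in> S"
  then obtain r a where "r > 0"
    and sums: "\<And>y. \<bar>y - x\<bar> < r \<Longrightarrow> (\<lambda>n. a n * (y - x)^n) sums G y"
    using assms unfolding real_analytic_on_def by blast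
  hence "\<forall>y. \<bar>y - x\<bar> < r \<longrightarrow> (\<lambda>n. diffs a n * (y - x)^n) sums deriv G y"
    using power_series_has_real_derivative(2) by blast
  with \<open>r > 0\<close>
  show "\<exists>r>0. \<exists>a. \<forall>y. \<bar>y - x\<bar> < r \<longrightarrow> (\<lambda>n. a n * (y - x)^n) sums deriv G y"
    by blast
qed

lemma real_analytic_on_imp_continuous_on:
  assumes "real_analytic_on G S"
  shows "continuous_on S G"
  using DERIV_isCont[OF real_analytic_on_imp_DERIV[OF assms]]
  by (simp add: continuous_at_imp_continuous_on)

lemma real_analytic_on_deriv_bounded_near:
  assumes "real_analytic_on G S" "c \<in> S"
  obtains \<rho> B where "\<rho> > 0" "B \<ge> 0" "cball c \<rho> \<subseteq> S"
    "\<And>x. x \<in> cball c \<rho> \<Longrightarrow> \<bar>deriv G x\<bar> \<le> B"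
proof -
  obtain \<rho> where \<rho>: "\<rho> > 0" "cball c \<rho> \<subseteq> S"
    using assms open_contains_cball unfolding real_analytic_on_def by blast
  have "continuous_on (cball c \<rho>) (deriv G)"
    using real_analytic_on_imp_continuous_on[OF real_analytic_on_deriv[OF assms(1)]] \<rho>(2)
    by (rule continuous_on_subset)
  hence "bounded (deriv G ` cball c \<rho>)"
    by (intro compact_imp_bounded compact_continuous_image) auto
  then obtain B where B: "\<forall>x\<in>cball c \<rho>. \<bar>deriv G x\<bar> \<le> B"
    unfolding bounded_iff by auto
  have "\<bar>deriv G c\<bar> \<le> B" using B \<rho>(1) by simp
  hence "B \<ge> 0" by linarith
  show ?thesis by (rule that[OF \<rho>(1) \<open>B \<ge> 0\<close> \<rho>(2)]) (use B in blast)
qed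

lemma real_analytic_on_locally_lipschitz:
  assumes "real_analytic_on G S" "c \<in> S"
  obtains \<rho> B where "\<rho> > 0" "B \<ge> 0"
    "\<And>x y. x \<in> cball c \<rho> \<Longrightarrow> y \<in> cball c \<rho> \<Longrightarrow> \<bar>G y - G x\<bar> \<le> B * \<bar>y - x\<bar>"
proof -
  obtain \<rho> B where \<rho>B: "\<rho> > 0" "B \<ge> 0" "cball c \<rho> \<subseteq> S"
    and bound: "\<And>x. x \<in> cball c \<rho> \<Longrightarrow> \<bar>deriv G x\<bar> \<le> B"
    using real_analytic_on_deriv_bounded_near[OF assms] by blast
  have G': "(G has_real_derivative deriv G z) (at z within cball c \<rho>)" if "z \<in> cball c \<rho>" for z
    using that \<rho>B(3) real_analytic_on_imp_DERIV[OF assms(1)]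
    by (blast intro: has_field_derivative_at_within)
  have "\<bar>G y - G x\<bar> \<le> B * \<bar>y - x\<bar>" if "x \<in> cball c \<rho>" "y \<in> cball c \<rho>" for x y
    using field_differentiable_bound[OF convex_cball G', of B y x] bound that by auto
  thus ?thesis by (rule that[OF \<rho>B(1,2)])
qed

lemma real_analytic_on_linearization_error:
  assumes "real_analytic_on G S" "c \<in> S"
  obtains \<rho> B where "\<rho> > 0" "B \<ge> 0"
    "\<And>m x y. m \<le> \<rho> \<Longrightarrow> x \<in> cball c m \<Longrightarrow> y \<in> cball c m \<Longrightarrow>
       \<bar>G y - G x - deriv G c * (y - x)\<bar> \<le> B * m * \<bar>y - x\<bar>"
proof -
  have analytic_deriv: "real_analytic_on (deriv G) S"
    by (rule real_analytic_on_deriv[OF assms(1)])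
  obtain \<rho> B where \<rho>B: "\<rho> > 0" "B \<ge> 0" "cball c \<rho> \<subseteq> S"
    and bound: "\<And>x. x \<in> cball c \<rho> \<Longrightarrow> \<bar>deriv (deriv G) x\<bar> \<le> B"
    using real_analytic_on_deriv_bounded_near[OF analytic_deriv assms(2)] by blast
  have "\<bar>G y - G x - deriv G c * (y - x)\<bar> \<le> B * m * \<bar>y - x\<bar>"
    if m: "m \<le> \<rho>" and xy: "x \<in> cball c m" "y \<in> cball c m" for m x y
  proof -
    have small: "cball c m \<subseteq> S" using m \<rho>B(3) by (meson order.trans subset_cball)
    have G'': "(deriv G has_real_derivative deriv (deriv G) z) (at z within cball c \<rho>)"
      if "z \<in> cball c \<rho>" for z
      using that \<rho>B(3) real_analytic_on_imp_DERIV[OF analytic_deriv]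
      by (blast intro: has_field_derivative_at_within)
    have "\<bar>deriv G t - deriv G c\<bar> \<le> B * m" if t: "t \<in> cball c m" for t
    proof -
      have "t \<in> cball c \<rho>" "c \<in> cball c \<rho>" using t m \<rho>B(1) by auto
      hence "\<bar>deriv G t - deriv G c\<bar> \<le> B * \<bar>t - c\<bar>"
        using field_differentiable_bound[OF convex_cball G'', of B t c] bound by auto
      also have "\<dots> \<le> B * m"
        using t \<rho>B(2) by (intro mult_left_mono) (auto simp: dist_real_def)
      finally show ?thesis .
    qed
    moreover have "((\<lambda>t. G t - deriv G c * t) has_real_derivative deriv G t - deriv G c) (at t)"
      if "t \<in> cball c m" for t
      using that small real_analytic_on_imp_DERIV[OF assms(1)]
      by (auto intro!: derivative_eq_intros)
    ultimately have "\<bar>(G y - deriv G c * y) - (G x - deriv G c * x)\<bar> \<le> B * m * \<bar>y - x\<bar>"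
      using field_differentiable_bound[OF convex_cball _ _ xy(2,1),
          of "\<lambda>t. G t - deriv G c * t" "\<lambda>t. deriv G t - deriv G c" "B * m"]
      by (simp add: has_field_derivative_at_within)
    thus ?thesis by (simp add: algebra_simps)
  qed
  thus ?thesis by (rule that[OF \<rho>B(1,2)])
qed

lemma real_analytic_cone_estimates:
  assumes "real_analytic_on F U" "0 \<in> U" "real_analytic_on J V" "0 \<in> V"
  shows "\<forall>K>0. \<exists>\<epsilon>>0. \<exists>C>0. \<forall>\<theta>\<in>{0<..<\<epsilon>}. \<forall>\<delta>::real. \<bar>\<delta>\<bar> \<le> K * \<theta> \<longrightarrow>
           \<bar>F (\<theta> + \<delta>) - F \<theta> - deriv F 0 * \<delta>\<bar> \<le> C * \<theta> * \<bar>\<delta>\<bar> \<and>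
           \<bar>J (\<theta> + \<delta>) - J \<theta>\<bar> \<le> C * \<bar>\<delta>\<bar>"
proof (intro allI impI)
  fix K :: real assume "K > 0"
  obtain \<rho>F BF where \<rho>F: "\<rho>F > 0" "BF \<ge> 0" and linF:
    "\<And>m x y. m \<le> \<rho>F \<Longrightarrow> x \<in> cball 0 m \<Longrightarrow> y \<in> cball 0 m \<Longrightarrow>
       \<bar>F y - F x - deriv F 0 * (y - x)\<bar> \<le> BF * m * \<bar>y - x\<bar>"
    using real_analytic_on_linearization_error[OF assms(1,2)] by blast
  obtain \<rho>J BJ where \<rho>J: "\<rho>J > 0" "BJ \<ge> 0" and lipJ:
    "\<And>x y. x \<in> cball 0 \<rho>J \<Longrightarrow> y \<in> cball 0 \<rho>J \<Longrightarrow> \<bar>J y - J x\<bar> \<le> BJ * \<bar>y - x\<bar>"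
    using real_analytic_on_locally_lipschitz[OF assms(3,4)] by blast
  define \<epsilon> where "\<epsilon> = min \<rho>F \<rho>J / (1 + K)"
  define C where "C = BF * (1 + K) + BJ + 1"
  have "\<bar>F (\<theta> + \<delta>) - F \<theta> - deriv F 0 * \<delta>\<bar> \<le> C * \<theta> * \<bar>\<delta>\<bar> \<and>
        \<bar>J (\<theta> + \<delta>) - J \<theta>\<bar> \<le> C * \<bar>\<delta>\<bar>"
    if \<theta>: "\<theta> \<in> {0<..<\<epsilon>}" and \<delta>: "\<bar>\<delta>\<bar> \<le> K * \<theta>" for \<theta> \<delta>
  proof
    define m where "m = (1 + K) * \<theta>"
    have m: "m \<le> \<rho>F" "m \<le> \<rho>J"
      using \<theta> \<open>K > 0\<close> by (auto simp: m_def \<epsilon>_def field_simps)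
    have in_cball: "\<theta> \<in> cball 0 m" "\<theta> + \<delta> \<in> cball 0 m"
      using \<theta> \<delta> by (auto simp: m_def dist_real_def algebra_simps)
    have "\<bar>F (\<theta> + \<delta>) - F \<theta> - deriv F 0 * \<delta>\<bar> \<le> BF * m * \<bar>\<delta>\<bar>"
      using linF[OF m(1) in_cball] by simp
    also have "\<dots> = BF * (1 + K) * \<theta> * \<bar>\<delta>\<bar>"
      by (simp add: m_def)
    also have "\<dots> \<le> C * \<theta> * \<bar>\<delta>\<bar>"
      using \<theta> \<rho>J(2) by (intro mult_right_mono) (auto simp: C_def)
    finally show "\<bar>F (\<theta> + \<delta>) - F \<theta> - deriv F 0 * \<delta>\<bar> \<le> C * \<theta> * \<bar>\<delta>\<bar>" .
    have "\<bar>J (\<theta> + \<delta>) - J \<theta>\<bar> \<le> BJ * \<bar>\<delta>\<bar>"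
      using lipJ in_cball subset_cball[OF m(2)] by fastforce
    also have "\<dots> \<le> C * \<bar>\<delta>\<bar>"
      using \<rho>F(2) \<open>K > 0\<close> by (auto simp: C_def intro!: mult_right_mono)
    finally show "\<bar>J (\<theta> + \<delta>) - J \<theta>\<bar> \<le> C * \<bar>\<delta>\<bar>" .
  qed
  moreover have "\<epsilon> > 0" "C > 0"
    using \<rho>F \<rho>J \<open>K > 0\<close> by (auto simp: \<epsilon>_def C_def add_nonneg_pos)
  ultimately show "\<exists>\<epsilon>>0. \<exists>C>0. \<forall>\<theta>\<in>{0<..<\<epsilon>}. \<forall>\<delta>::real. \<bar>\<delta>\<bar> \<le> K * \<theta> \<longrightarrow>
           \<bar>F (\<theta> + \<delta>) - F \<theta> - deriv F 0 * \<delta>\<bar> \<le> C * \<theta> * \<bar>\<delta>\<bar> \<and>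
           \<bar>J (\<theta> + \<delta>) - J \<theta>\<bar> \<le> C * \<bar>\<delta>\<bar>"
    by blast
qed

lemma isCont_at_0_eq_limit_along:
  fixes F h g :: "real \<Rightarrow> real"
  assumes "isCont F 0" "\<forall>\<theta>>0. F \<theta> = h \<theta>" "filterlim g (at_right 0) (at_right 0)"
    and "((\<lambda>s. h (g s)) \<longlongrightarrow> L) (at_right 0)"
  shows "F 0 = L"
proof -
  have g: "(g \<longlongrightarrow> 0) (at_right 0)" "eventually (\<lambda>s. g s > 0) (at_right 0)"
    using assms(3) by (auto simp: filterlim_at elim: eventually_mono)
  have "eventually (\<lambda>s. h (g s) = F (g s)) (at_right 0)"
    using g(2) by eventually_elim (simp add: assms(2))
  hence "((\<lambda>s. F (g s)) \<longlongrightarrow> L) (at_right 0)"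
    using assms(4) by (rule tendsto_cong[THEN iffD1])
  moreover have "((\<lambda>s. F (g s)) \<longlongrightarrow> F 0) (at_right 0)"
    by (rule isCont_tendsto_compose[OF assms(1) g(1)])
  ultimately show ?thesis
    using tendsto_unique[OF trivial_limit_at_right_real] by blast
qed

lemma DERIV_at_0_eq_limit_along:
  fixes F h g :: "real \<Rightarrow> real"
  assumes "(F has_real_derivative D) (at 0)" "\<forall>\<theta>>0. F \<theta> = h \<theta>"
    and "filterlim g (at_right 0) (at_right 0)"
    and "((\<lambda>s. (h (g s) - F 0) / g s) \<longlongrightarrow> L) (at_right 0)"
  shows "D = L"
proof -
  have "((\<lambda>t. (F t - F 0) / t) \<longlongrightarrow> D) (at 0)"
    using assms(1) by (simp add: DERIV_def)
  moreover have "filterlim g (at 0) (at_right 0)"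
    by (rule filterlim_mono[OF assms(3) at_within_le_at order_refl])
  ultimately have "((\<lambda>s. (F (g s) - F 0) / g s) \<longlongrightarrow> D) (at_right 0)"
    by (rule filterlim_compose)
  moreover have "eventually (\<lambda>s. (h (g s) - F 0) / g s = (F (g s) - F 0) / g s) (at_right 0)"
    using assms(3) unfolding filterlim_at by (auto elim: eventually_mono simp: assms(2))
  hence "((\<lambda>s. (F (g s) - F 0) / g s) \<longlongrightarrow> L) (at_right 0)"
    using assms(4) by (rule tendsto_cong[THEN iffD1])
  ultimately show ?thesis
    using tendsto_unique[OF trivial_limit_at_right_real] by blast
qed

lemma artanh_gt_self:
  fixes x :: real assumes "0 < x" "x < 1"
  shows "x < artanh x"
proof -
  have "(\<lambda>t. artanh t - t) 0 < (\<lambda>t. artanh t - t) x"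
  proof (rule DERIV_pos_imp_increasing_open[OF assms(1)])
    fix t :: real assume t: "0 < t" "t < x"
    hence "t^2 < 1" "0 < t^2" using assms by (simp_all add: power_less_one_iff)
    hence "1 / (1 - t^2) - 1 > 0" by (simp add: field_simps)
    moreover have "((\<lambda>t. artanh t - t) has_real_derivative 1 / (1 - t^2) - 1) (at t)"
      using t assms by (auto intro!: derivative_eq_intros)
    ultimately show "\<exists>y. ((\<lambda>t. artanh t - t) has_real_derivative y) (at t) \<and> 0 < y"
      by blast
  qed (use assms in \<open>auto intro!: continuous_intros\<close>)
  thus ?thesis by simp
qed

lemma artanh_less_div:
  fixes x :: real assumes "0 < x" "x < 1"
  shows "artanh x < x / (1 - x^2)"
proof -
  have "(\<lambda>t. t - (1 - t^2) * artanh t) 0 < (\<lambda>t. t - (1 - t^2) * artanh t) x"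
  proof (rule DERIV_pos_imp_increasing_open[OF assms(1)])
    fix t :: real assume t: "0 < t" "t < x"
    hence "t^2 < 1" using assms by (simp add: power_less_one_iff)
    hence "t^2 \<noteq> 1" by simp
    hence "((\<lambda>t. t - (1 - t^2) * artanh t) has_real_derivative 2 * t * artanh t) (at t)"
      using t assms by (auto intro!: derivative_eq_intros)
    moreover have "2 * t * artanh t > 0"
      using artanh_gt_self[of t] t assms by simp
    ultimately show "\<exists>y. ((\<lambda>t. t - (1 - t^2) * artanh t) has_real_derivative y) (at t) \<and> 0 < y"
      by blast
  qed (use assms in \<open>auto intro!: continuous_intros\<close>)
  moreover have "1 - x^2 > 0" using assms by (simp add: power_less_one_iff)
  ultimately show ?thesis by (simp add: field_simps)
qed

lemma strict_mono_on_artanh_div: "strict_mono_on {0<..<1} (\<lambda>x::real. artanh x / x)"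
proof (rule strict_mono_onI)
  fix a b :: real assume ab: "a \<in> {0<..<1}" "b \<in> {0<..<1}" "a < b"
  show "artanh a / a < artanh b / b"
  proof (rule DERIV_pos_imp_increasing_open[OF ab(3)])
    fix x :: real assume x: "a < x" "x < b"
    hence "0 < x" "x < 1" using ab by auto
    hence "((\<lambda>x. artanh x / x) has_real_derivative (x / (1 - x^2) - artanh x) / x^2) (at x)"
      by (auto intro!: derivative_eq_intros simp: field_simps power2_eq_square)
    moreover have "(x / (1 - x^2) - artanh x) / x^2 > 0"
      using artanh_less_div \<open>0 < x\<close> \<open>x < 1\<close> by simp
    ultimately show "\<exists>y. ((\<lambda>x. artanh x / x) has_real_derivative y) (at x) \<and> 0 < y"
      by blast
  qed (use ab in \<open>auto intro!: continuous_intros\<close>)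
qed

definition theta_of :: "real \<Rightarrow> real" where
  "theta_of s = artanh s / s - 1"

lemma theta_of_pos: "0 < s \<Longrightarrow> s < 1 \<Longrightarrow> 0 < theta_of s"
  using artanh_gt_self[of s] by (simp add: theta_of_def field_simps)

lemma lam_theta_of:
  assumes s: "0 < s" "s < 1"
  shows "lam (theta_of s) = (1 - s^2) / 4"
proof -
  have "(THE l. 0 < l \<and> l < 1/4 \<and> -1 + artanh (sqrt (1 - 4*l)) / sqrt (1 - 4*l) = theta_of s)
        = (1 - s^2) / 4"
  proof (rule the_equality)
    have "1 - 4 * ((1 - s^2) / 4) = s^2" by (simp add: field_simps)
    hence "sqrt (1 - 4 * ((1 - s^2) / 4)) = s" using s by simp
    thus "0 < (1 - s^2) / 4 \<and> (1 - s^2) / 4 < 1/4 \<and>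
        -1 + artanh (sqrt (1 - 4 * ((1 - s^2) / 4))) / sqrt (1 - 4 * ((1 - s^2) / 4)) = theta_of s"
      using s by (simp add: theta_of_def power_less_one_iff)
  next
    fix l assume l: "0 < l \<and> l < 1/4 \<and> -1 + artanh (sqrt (1 - 4*l)) / sqrt (1 - 4*l) = theta_of s"
    define t where "t = sqrt (1 - 4*l)"
    have t: "t \<in> {0<..<1}" using l by (auto simp: t_def real_sqrt_less_iff)
    have "artanh t / t = artanh s / s" using l by (simp add: t_def theta_of_def)
    moreover have "s \<in> {0<..<1}" using s by simp
    ultimately have "t = s"
      by (intro inj_onD[OF strict_mono_on_imp_inj_on[OF strict_mono_on_artanh_div] _ t])
    moreover have "t^2 = 1 - 4*l" using l by (simp add: t_def)
    ultimately show "l = (1 - s^2) / 4" by simp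
  qed
  thus ?thesis using theta_of_pos[OF s] by (simp add: lam_def)
qed

lemma f0_theta_of:
  assumes "0 < s" "s < 1"
  shows "f0 (theta_of s) =
    ln 4 - ln (1 - s^2) - 2 * theta_of s + theta_of s * ln (theta_of s / s^2)"
proof -
  have sq: "1 - 4 * ((1 - s^2) / 4) = s^2" by (simp add: field_simps)
  have "0 < 1 - s^2" using assms by (simp add: power_less_one_iff)
  hence ln_lam: "ln ((1 - s^2) / 4) = ln (1 - s^2) - ln 4" by (simp add: ln_div)
  have ln_ratio: "ln (theta_of s / s^2) = ln (theta_of s) - ln (s^2)"
    using assms theta_of_pos[OF assms] by (simp add: ln_div)
  show ?thesis
    unfolding f0_def f_def lam_theta_of[OF assms] sq ln_lam ln_ratio by (simp add: algebra_simps)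
qed

lemma j0_theta_of:
  assumes "0 < s" "s < 1"
  shows "j0 (theta_of s) =
    (ln 2 + ln (theta_of s / s^2) - ln (1 - theta_of s / s^2 * (1 - s^2))) / 2"
proof -
  have "artanh s * (1 - s^2) < s"
    using artanh_less_div[OF assms] assms by (simp add: field_simps power_less_one_iff)
  hence pos: "1 - theta_of s / s^2 * (1 - s^2) > 0"
    using assms by (simp add: theta_of_def field_simps power2_eq_square)
  have factor: "1 - 4 * (theta_of s + 1) * ((1 - s^2) / 4) = s^2 * (1 - theta_of s / s^2 * (1 - s^2))"
    using assms by (simp add: field_simps)
  have ln_factor: "ln (s^2 * (1 - theta_of s / s^2 * (1 - s^2)))
      = ln (s^2) + ln (1 - theta_of s / s^2 * (1 - s^2))"
    using assms pos by (simp add: ln_mult)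
  have ln_ratio: "ln (theta_of s / s^2) = ln (theta_of s) - ln (s^2)"
    using assms theta_of_pos[OF assms] by (simp add: ln_div)
  show ?thesis
    unfolding j0_def j_def lam_theta_of[OF assms] factor ln_factor ln_ratio by (simp add: field_simps)
qed

lemma eventually_at_right_0_less_1: "eventually (\<lambda>s::real. 0 < s \<and> s < 1) (at_right 0)"
  by (auto simp: eventually_at_right_field intro!: exI[of _ 1])

lemma filterlim_theta_of: "filterlim theta_of (at_right 0) (at_right 0)"
  unfolding theta_of_def by real_asymp

lemma tendsto_theta_of_div_sq: "((\<lambda>s. theta_of s / s^2) \<longlongrightarrow> 1/3) (at_right 0)"
  unfolding theta_of_def by real_asymp

lemma tendsto_ln_one_minus_sq_div_theta_of:
  "((\<lambda>s. ln (1 - s^2) / theta_of s) \<longlongrightarrow> -3) (at_right 0)"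
  unfolding theta_of_def by real_asymp

lemma tendsto_f0_theta_of: "((\<lambda>s. f0 (theta_of s)) \<longlongrightarrow> ln 4) (at_right 0)"
proof -
  have "(theta_of \<longlongrightarrow> 0) (at_right 0)"
    using filterlim_theta_of by (simp add: filterlim_at)
  hence lim: "((\<lambda>s. ln 4 - ln (1 - s^2) - 2 * theta_of s + theta_of s * ln (theta_of s / s^2))
      \<longlongrightarrow> ln 4 - ln (1 - 0^2) - 2 * 0 + 0 * ln (1/3)) (at_right 0)"
    by (intro tendsto_intros tendsto_theta_of_div_sq) auto
  have "eventually (\<lambda>s. ln 4 - ln (1 - s^2) - 2 * theta_of s
      + theta_of s * ln (theta_of s / s^2) = f0 (theta_of s)) (at_right 0)"
    using eventually_at_right_0_less_1 by eventually_elim (simp add: f0_theta_of)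
  from Lim_transform_eventually[OF lim this] show ?thesis by simp
qed

lemma tendsto_f0_slope_theta_of:
  "((\<lambda>s. (f0 (theta_of s) - ln 4) / theta_of s) \<longlongrightarrow> 1 - ln 3) (at_right 0)"
proof -
  have lim: "((\<lambda>s. - (ln (1 - s^2) / theta_of s) - 2 + ln (theta_of s / s^2))
      \<longlongrightarrow> - (-3) - 2 + ln (1/3)) (at_right 0)"
    by (intro tendsto_intros tendsto_ln_one_minus_sq_div_theta_of tendsto_theta_of_div_sq) auto
  have "eventually (\<lambda>s. - (ln (1 - s^2) / theta_of s) - 2 + ln (theta_of s / s^2)
      = (f0 (theta_of s) - ln 4) / theta_of s) (at_right 0)"
    using eventually_at_right_0_less_1
  proof eventually_elim
    case (elim s)
    hence "theta_of s \<noteq> 0" using theta_of_pos by force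
    with elim show ?case by (simp add: f0_theta_of field_simps)
  qed
  from Lim_transform_eventually[OF lim this] show ?thesis by (simp add: ln_div)
qed

lemma tendsto_j0_theta_of: "((\<lambda>s. j0 (theta_of s)) \<longlongrightarrow> 0) (at_right 0)"
proof -
  have lim: "((\<lambda>s. (ln 2 + ln (theta_of s / s^2) - ln (1 - theta_of s / s^2 * (1 - s^2))) / 2)
      \<longlongrightarrow> (ln 2 + ln (1/3) - ln (1 - 1/3 * (1 - 0^2))) / 2) (at_right 0)"
    by (intro tendsto_intros tendsto_theta_of_div_sq) auto
  have "eventually (\<lambda>s. (ln 2 + ln (theta_of s / s^2)
      - ln (1 - theta_of s / s^2 * (1 - s^2))) / 2 = j0 (theta_of s)) (at_right 0)"
    using eventually_at_right_0_less_1 by eventually_elim (simp add: j0_theta_of)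
  from Lim_transform_eventually[OF lim this] show ?thesis by (simp add: ln_div)
qed

theorem lemma1:
  fixes F J :: "real \<Rightarrow> real" and U V :: "real set"
  assumes "0 \<in> U" "{0<..} \<subseteq> U" "real_analytic_on F U" "\<forall>\<theta>>0. F \<theta> = f0 \<theta>"
      and "0 \<in> V" "{0<..} \<subseteq> V" "real_analytic_on J V" "\<forall>\<theta>>0. J \<theta> = j0 \<theta>"
  shows "(\<forall>K>0. \<exists>\<epsilon>>0. \<exists>C>0. \<forall>\<theta>\<in>{0<..<\<epsilon>}. \<forall>\<delta>::real. \<bar>\<delta>\<bar> \<le> K * \<theta> \<longrightarrow>
            \<bar>F (\<theta> + \<delta>) - F \<theta> - deriv F 0 * \<delta>\<bar> \<le> C * \<theta> * \<bar>\<delta>\<bar> \<and>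
            \<bar>J (\<theta> + \<delta>) - J \<theta>\<bar> \<le> C * \<bar>\<delta>\<bar>)
         \<and> F 0 = ln 4 \<and> exp (deriv F 0) = exp 1 / 3 \<and> J 0 = 0"
proof -
  have F': "(F has_real_derivative deriv F 0) (at 0)"
    by (rule real_analytic_on_imp_DERIV[OF assms(3,1)])
  have J': "(J has_real_derivative deriv J 0) (at 0)"
    by (rule real_analytic_on_imp_DERIV[OF assms(7,5)])
  have F0: "F 0 = ln 4"
    by (rule isCont_at_0_eq_limit_along[OF DERIV_isCont[OF F'] assms(4)
          filterlim_theta_of tendsto_f0_theta_of])
  have "deriv F 0 = 1 - ln 3"
    by (rule DERIV_at_0_eq_limit_along[OF F' assms(4) filterlim_theta_of])
       (simp add: F0 tendsto_f0_slope_theta_of)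
  hence "exp (deriv F 0) = exp 1 / 3"
    by (simp add: exp_diff)
  moreover have "J 0 = 0"
    by (rule isCont_at_0_eq_limit_along[OF DERIV_isCont[OF J'] assms(8)
          filterlim_theta_of tendsto_j0_theta_of])
  ultimately show ?thesis
    using real_analytic_cone_estimates[OF assms(3,1,7,5)] F0 by blast
qed

end
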